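(* Let $X\in\mathbb{R}^{n\times p}$ be a fixed (deterministic) matrix with $\frac1n\sum_{i=1}^n X_{ij}^2\le M^2$ for all $j=1,\dots,p$, for some $M>0$. Let $\delta>0$, let $W\in\mathbb{R}^{n\times p}$ have i.i.d. entries $W_{ik}\sim\mathcal N(0,\delta^2)$, and set $X^{(\delta)}=X+W$, \[ \Sigma=\tfrac1n X^\top X,\qquad \widetilde\Sigma^{(\delta)}=\tfrac1n (X^{(\delta)})^\top X^{(\delta)}-\delta^2 I_p . \] Let $S\subset\{1,\dots,p\}$ be a nonempty proper subset with $\Sigma_{SS}$ invertible and $\|\Sigma_{S^cS}\Sigma_{SS}^{-1}\|_\infty\le 1-\eta$ for some $\eta\in(0,1)$. Let $\varepsilon_0>0$ be such that for every matrix $\Delta\in\mathbb{R}^{p\times p}$ with $\|\Delta\|_\infty\le\varepsilon_0$, the matrix $(\Sigma+\Delta)_{SS}$ is invertible and $\|(\Sigma+\Delta)_{S^cS}((\Sigma+\Delta)_{SS})^{-1}\|_\infty\le 1-\eta/2$. Then there is an absolute constant $C_t>0$ such that the following holds. Let $\alpha\in(0,1)$ and define \[ L=\log\frac{4p^2}{\alpha},\quad t_1=2M\sqrt{\frac{2\delta^2L}{n}},\quad t_2=C_t\,\delta^2\Big(\sqrt{\frac Ln}+\frac Ln\Big),\quad \varepsilon=p(t_1+t_2). \] If $\varepsilon\le\varepsilon_0$, then \[ \mathbb P\Big(\big\|\widetilde\Sigma^{(\delta)}_{S^cS}(\widetilde\Sigma^{(\delta)}_{SS})^{-1}\big\|_\infty\le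 1-\frac\eta2\Big)\ge 1-\alpha, \] where the event includes invertibility of $\widetilde\Sigma^{(\delta)}_{SS}$.
   Context: For a matrix $A$, $\|A\|_\infty$ denotes the induced $\ell_\infty$ operator norm, i.e. the maximum absolute row sum $\max_i\sum_j|A_{ij}|$. For index sets $I,J$, $A_{IJ}$ denotes the submatrix of $A$ with rows indexed by $I$ and columns indexed by $J$; $S^c$ is the complement of $S$ in $\{1,\dots,p\}$. The probability is over $W$. *)

theory Defs
  imports "HOL-Probability.Probability"
begin

text \<open>Matrices are functions nat => nat => real; only the entries with indices in the
  relevant index sets matter. Indices are 0-based: rows {..<n}, columns {..<p}.\<close>

definition inf_norm :: "nat set \<Rightarrow> nat set \<Rightarrow> (nat \<Rightarrow> nat \<Rightarrow> real) \<Rightarrow> real" where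
  "inf_norm I J A = (if I = {} then 0 else Max ((\<lambda>i. \<Sum>j\<in>J. \<bar>A i j\<bar>) ` I))"

definition mat_mult :: "nat set \<Rightarrow> (nat \<Rightarrow> nat \<Rightarrow> real) \<Rightarrow> (nat \<Rightarrow> nat \<Rightarrow> real) \<Rightarrow> (nat \<Rightarrow> nat \<Rightarrow> real)" where
  "mat_mult K A B = (\<lambda>i j. \<Sum>k\<in>K. A i k * B k j)"

definition is_sub_inverse :: "nat set \<Rightarrow> (nat \<Rightarrow> nat \<Rightarrow> real) \<Rightarrow> (nat \<Rightarrow> nat \<Rightarrow> real) \<Rightarrow> bool" where
  "is_sub_inverse S A B \<longleftrightarrow>
     (\<forall>i\<in>S. \<forall>j\<in>S. mat_mult S A B i j = (if i = j then 1 else 0)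
                    \<and> mat_mult S B A i j = (if i = j then 1 else 0))"

definition sub_invertible :: "nat set \<Rightarrow> (nat \<Rightarrow> nat \<Rightarrow> real) \<Rightarrow> bool" where
  "sub_invertible S A \<longleftrightarrow> (\<exists>B. is_sub_inverse S A B)"

definition sub_inv :: "nat set \<Rightarrow> (nat \<Rightarrow> nat \<Rightarrow> real) \<Rightarrow> (nat \<Rightarrow> nat \<Rightarrow> real)" where
  "sub_inv S A = (SOME B. is_sub_inverse S A B)"

definition irrep :: "nat \<Rightarrow> nat set \<Rightarrow> (nat \<Rightarrow> nat \<Rightarrow> real) \<Rightarrow> real" where
  "irrep p S A = inf_norm ({..<p} - S) S (mat_mult S A (sub_inv S A))"

definition gram :: "nat \<Rightarrow> (nat \<Rightarrow> nat \<Rightarrow> real) \<Rightarrow> (nat \<Rightarrow> nat \<Rightarrow> real)" where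
  "gram n X = (\<lambda>j k. (1 / real n) * (\<Sum>i<n. X i j * X i k))"

definition noisy_gram :: "nat \<Rightarrow> real \<Rightarrow> (nat \<Rightarrow> nat \<Rightarrow> real) \<Rightarrow> (nat \<times> nat \<Rightarrow> real) \<Rightarrow> (nat \<Rightarrow> nat \<Rightarrow> real)" where
  "noisy_gram n \<delta> X W = (\<lambda>j k. (1 / real n) * (\<Sum>i<n. (X i j + W (i, j)) * (X i k + W (i, k)))
                                 - (if j = k then \<delta>\<^sup>2 else 0))"

definition noise_measure :: "nat \<Rightarrow> nat \<Rightarrow> real \<Rightarrow> (nat \<times> nat \<Rightarrow> real) measure" where
  "noise_measure n p \<delta> = PiM ({..<n} \<times> {..<p}) (\<lambda>_. density lborel (normal_density 0 \<delta>))"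

end

(*
  Write the corrected Gram matrix as Sigma~ = Sigma + (X^T W + W^T X) / n + (W^T W - n delta^2 I) / n.
  An entry of the linear part is a centred Gaussian linear form of variance at most delta^2 M^2 / n,
  hence sub-Gaussian. An entry of the quadratic part, divided by delta^2, has moment generating
  function at most exp (4 n u^2) for |u| <= 1/4: for j = k it is a centred chi-square, and for
  j <> k integrating out one column leaves a Gaussian linear form in the other. It is therefore
  sub-exponential, and C_t = 20 suffices. Chernoff bounds and a union bound over the 4 p^2 one-sided
  tails give |Sigma~ - Sigma|_inf <= p (t1 + t2) <= eps0 with probability at least 1 - alpha, and the
  perturbation hypothesis on eps0 turns this into the incoherence bound. The event is measurable
  because (Sigma~_SS)^-1 is the adjugate divided by the determinant, a rational function of W.
*)

theory Submission
  imports Defs "Jordan_Normal_Form.Determinant"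
begin

section \<open>Chernoff bounds\<close>

lemma emeasure_ge_le_exp_mgf:
  assumes "Y \<in> borel_measurable M" "s > 0"
  shows "emeasure M {x \<in> space M. a \<le> Y x} \<le> ennreal (exp (- s * a)) * (\<integral>\<^sup>+x. ennreal (exp (s * Y x)) \<partial>M)"
proof -
  have "(\<integral>\<^sup>+x. ennreal (exp (s * Y x)) * indicator (space M) x \<partial>M) = (\<integral>\<^sup>+x. ennreal (exp (s * Y x)) \<partial>M)"
    by (intro nn_integral_cong) simp
  then show ?thesis
    using Chernoff_ineq_nn_integral_ge[of s "space M" M Y a] assms by simp
qed

lemma subgaussian_tail:
  assumes "Y \<in> borel_measurable M" "v > 0" "t > 0"
    and mgf: "\<And>l. l > 0 \<Longrightarrow> (\<integral>\<^sup>+x. ennreal (exp (l * Y x)) \<partial>M) \<le> ennreal (exp (l\<^sup>2 * v / 2))"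
  shows "emeasure M {x \<in> space M. t \<le> Y x} \<le> ennreal (exp (- (t\<^sup>2 / (2 * v))))"
proof -
  have l: "t / v > 0" using assms by simp
  have "emeasure M {x \<in> space M. t \<le> Y x}
      \<le> ennreal (exp (- (t / v) * t)) * (\<integral>\<^sup>+x. ennreal (exp (t / v * Y x)) \<partial>M)"
    by (rule emeasure_ge_le_exp_mgf[OF assms(1) l])
  also have "\<dots> \<le> ennreal (exp (- (t / v) * t)) * ennreal (exp ((t / v)\<^sup>2 * v / 2))"
    by (intro mult_left_mono mgf l) simp
  also have "\<dots> = ennreal (exp (- (t\<^sup>2 / (2 * v))))"
    using assms(2) by (simp add: ennreal_mult'[symmetric] power2_eq_square field_simps flip: exp_add)
  finally show ?thesis .
qed

lemma subexponential_tail: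
  fixes n :: real
  assumes "Y \<in> borel_measurable M" "\<sigma> > 0" "n > 0" "L > 0"
    and mgf: "\<And>u. 0 < u \<Longrightarrow> u \<le> 1/4 \<Longrightarrow>
      (\<integral>\<^sup>+x. ennreal (exp (u / \<sigma> * Y x)) \<partial>M) \<le> ennreal (exp (4 * n * u\<^sup>2))"
  shows "emeasure M {x \<in> space M. n * (20 * \<sigma> * (sqrt (L / n) + L / n)) \<le> Y x} \<le> ennreal (exp (- L))"
proof -
  define r where "r = sqrt (L / n)"
  have r: "r > 0" "L = n * r\<^sup>2"
    using assms(3,4) by (simp_all add: r_def)
  define u where "u = min r (1/4)"
  have u: "0 < u" "u \<le> 1/4" using r(1) by (simp_all add: u_def)
  define t where "t = n * (20 * \<sigma> * (sqrt (L / n) + L / n))"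
  have t: "t = n * (20 * \<sigma> * (r + r\<^sup>2))"
    using assms(3,4) by (simp add: t_def r_def)
  \<comment> \<open>the choice u = min r (1/4) makes the Chernoff exponent at most -L in both regimes\<close>
  have key: "4 * u\<^sup>2 - 20 * u * (r + r\<^sup>2) + r\<^sup>2 \<le> 0"
  proof (cases "r \<le> 1/4")
    case True
    then have "4 * u\<^sup>2 - 20 * u * (r + r\<^sup>2) + r\<^sup>2 = - (15 * r\<^sup>2 + 20 * r * r\<^sup>2)"
      by (simp add: u_def algebra_simps power2_eq_square)
    moreover have "0 \<le> 15 * r\<^sup>2 + 20 * r * r\<^sup>2" using r(1) by simp
    ultimately show ?thesis by linarith
  next
    case False
    then have "4 * u\<^sup>2 - 20 * u * (r + r\<^sup>2) + r\<^sup>2 = 1/4 - 5 * r - 4 * r\<^sup>2"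
      by (simp add: u_def algebra_simps power2_eq_square)
    then show ?thesis using False zero_le_power2[of r] by linarith
  qed
  have "emeasure M {x \<in> space M. t \<le> Y x}
      \<le> ennreal (exp (- (u / \<sigma>) * t)) * (\<integral>\<^sup>+x. ennreal (exp (u / \<sigma> * Y x)) \<partial>M)"
    using u assms(2) by (intro emeasure_ge_le_exp_mgf assms(1)) simp
  also have "\<dots> \<le> ennreal (exp (- (u / \<sigma>) * t)) * ennreal (exp (4 * n * u\<^sup>2))"
    by (intro mult_left_mono mgf u) simp
  also have "\<dots> = ennreal (exp (n * (4 * u\<^sup>2 - 20 * u * (r + r\<^sup>2))))"
    using assms(2) by (simp add: t ennreal_mult'[symmetric] field_simps flip: exp_add)
  also have "\<dots> \<le> ennreal (exp (- L))"
    using key assms(3) mult_left_mono[OF key, of n] by (simp add: r(2) algebra_simps)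
  finally show ?thesis unfolding t_def .
qed

lemma measure_abs_ge_le:
  fixes Y :: "'a \<Rightarrow> real"
  assumes "finite_measure M" "Y \<in> borel_measurable M" "b \<ge> 0"
    and "emeasure M {x \<in> space M. t \<le> Y x} \<le> ennreal b"
    and "emeasure M {x \<in> space M. t \<le> - Y x} \<le> ennreal b"
  shows "measure M {x \<in> space M. t \<le> \<bar>Y x\<bar>} \<le> 2 * b"
proof -
  interpret finite_measure M by fact
  have [measurable]: "Y \<in> borel_measurable M" by fact
  have "{x \<in> space M. t \<le> \<bar>Y x\<bar>} = {x \<in> space M. t \<le> Y x} \<union> {x \<in> space M. t \<le> - Y x}"
    by auto
  then have "measure M {x \<in> space M. t \<le> \<bar>Y x\<bar>}
      \<le> measure M {x \<in> space M. t \<le> Y x} + measure M {x \<in> space M. t \<le> - Y x}"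
    by (auto intro!: measure_subadditive emeasure_finite)
  also have "\<dots> \<le> b + b"
    using assms(3-5) by (intro add_mono) (simp_all add: emeasure_eq_measure ennreal_le_iff)
  finally show ?thesis by simp
qed

section \<open>Gaussian moment generating functions\<close>

abbreviation centered_normal :: "real \<Rightarrow> real measure" where
  "centered_normal \<delta> \<equiv> density lborel (normal_density 0 \<delta>)"

lemma nn_integral_normal_density:
  assumes "\<sigma> > 0"
  shows "(\<integral>\<^sup>+x. ennreal (normal_density \<mu> \<sigma> x) \<partial>lborel) = 1"
  using integrable_normal_density[OF assms] integral_normal_density[OF assms]
  by (subst nn_integral_eq_integral) auto

lemma nn_integral_centered_normal_rescale:
  assumes "\<sigma> > 0" "c \<ge> 0" "g \<in> borel_measurable borel"
    and "\<And>x. normal_density 0 \<delta> x * g x = c * normal_density \<mu> \<sigma> x"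
  shows "(\<integral>\<^sup>+y. ennreal (g y) \<partial>centered_normal \<delta>) = ennreal c"
proof -
  have "(\<integral>\<^sup>+y. ennreal (g y) \<partial>centered_normal \<delta>)
      = (\<integral>\<^sup>+y. ennreal (normal_density 0 \<delta> y * g y) \<partial>lborel)"
    using assms(3) by (subst nn_integral_density) (auto simp: ennreal_mult')
  also have "\<dots> = (\<integral>\<^sup>+y. ennreal c * ennreal (normal_density \<mu> \<sigma> y) \<partial>lborel)"
    using assms(2,4) by (simp add: ennreal_mult)
  also have "\<dots> = ennreal c"
    by (subst nn_integral_cmult) (auto simp: nn_integral_normal_density assms(1))
  finally show ?thesis .
qed

lemma centered_normal_mgf:
  assumes "\<delta> > 0"
  shows "(\<integral>\<^sup>+y. ennreal (exp (a * y)) \<partial>centered_normal \<delta>) = ennreal (exp (a\<^sup>2 * \<delta>\<^sup>2 / 2))"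
proof (rule nn_integral_centered_normal_rescale[OF assms, where \<mu> = "a * \<delta>\<^sup>2"])
  fix x
  \<comment> \<open>completing the square in the exponent\<close>
  have "- (x - 0)\<^sup>2 / (2 * \<delta>\<^sup>2) + a * x = a\<^sup>2 * \<delta>\<^sup>2 / 2 + - (x - a * \<delta>\<^sup>2)\<^sup>2 / (2 * \<delta>\<^sup>2)"
    using assms by (simp add: field_simps power2_eq_square)
  then show "normal_density 0 \<delta> x * exp (a * x) = exp (a\<^sup>2 * \<delta>\<^sup>2 / 2) * normal_density (a * \<delta>\<^sup>2) \<delta> x"
    unfolding normal_density_def by (simp add: algebra_simps flip: exp_add)
qed simp_all

lemma centered_normal_square_mgf:
  assumes "\<delta> > 0" "2 * s * \<delta>\<^sup>2 < 1"
  shows "(\<integral>\<^sup>+y. ennreal (exp (s * y\<^sup>2)) \<partial>centered_normal \<delta>) = ennreal (1 / sqrt (1 - 2 * s * \<delta>\<^sup>2))"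
proof (rule nn_integral_centered_normal_rescale[where \<mu> = 0 and \<sigma> = "\<delta> / sqrt (1 - 2 * s * \<delta>\<^sup>2)"])
  define q where "q = 1 - 2 * s * \<delta>\<^sup>2"
  have q: "q > 0" using assms by (simp add: q_def)
  show "\<delta> / sqrt (1 - 2 * s * \<delta>\<^sup>2) > 0" using q assms by (simp add: q_def[symmetric])
  fix x
  have exponent: "- (x - 0)\<^sup>2 / (2 * \<delta>\<^sup>2) + s * x\<^sup>2 = - (x - 0)\<^sup>2 / (2 * (\<delta> / sqrt q)\<^sup>2)"
    using assms q unfolding q_def by (simp add: field_simps power_divide)
  have normalisation: "1 / sqrt (2 * pi * \<delta>\<^sup>2) = 1 / sqrt q * (1 / sqrt (2 * pi * (\<delta> / sqrt q)\<^sup>2))"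
    using q assms by (simp add: power_divide real_sqrt_divide real_sqrt_mult field_simps)
  have "exp (- (x - 0)\<^sup>2 / (2 * \<delta>\<^sup>2)) * exp (s * x\<^sup>2) = exp (- (x - 0)\<^sup>2 / (2 * (\<delta> / sqrt q)\<^sup>2))"
    by (simp only: exp_add[symmetric] exponent)
  then show "normal_density 0 \<delta> x * exp (s * x\<^sup>2)
      = 1 / sqrt (1 - 2 * s * \<delta>\<^sup>2) * normal_density 0 (\<delta> / sqrt (1 - 2 * s * \<delta>\<^sup>2)) x"
    unfolding normal_density_def q_def[symmetric] normalisation by simp
qed (use assms(2) in simp_all)

lemma ln_one_minus_ge:
  fixes x :: real
  assumes "\<bar>x\<bar> \<le> 1/2"
  shows "- x - 2 * x\<^sup>2 \<le> ln (1 - x)"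
proof (cases "x \<ge> 0")
  case True
  then show ?thesis using ln_one_minus_pos_lower_bound[of x] assms by auto
next
  case False
  then have "- x - x\<^sup>2 \<le> ln (1 - x)"
    using assms ln_one_plus_pos_lower_bound[of "- x"] by simp
  then show ?thesis using zero_le_square[of x] unfolding power2_eq_square by linarith
qed

lemma inverse_sqrt_one_minus_le_exp:
  fixes x :: real
  assumes "\<bar>x\<bar> \<le> 1/2"
  shows "1 / sqrt (1 - x) \<le> exp (x / 2 + x\<^sup>2)"
proof -
  have "exp (- x - 2 * x\<^sup>2) \<le> 1 - x"
    using ln_one_minus_ge[OF assms] assms by (simp add: ln_ge_iff)
  moreover have "(exp (- x / 2 - x\<^sup>2))\<^sup>2 = exp (- x - 2 * x\<^sup>2)"
    by (simp add: power2_eq_square flip: exp_add)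
  ultimately have "exp (- x / 2 - x\<^sup>2) \<le> sqrt (1 - x)"
    by (intro real_le_rsqrt) simp
  then have "1 / sqrt (1 - x) \<le> 1 / exp (- x / 2 - x\<^sup>2)"
    using assms by (intro divide_left_mono) auto
  also have "1 / exp (- x / 2 - x\<^sup>2) = exp (x / 2 + x\<^sup>2)"
    using exp_add[of "x / 2 + x\<^sup>2" "- x / 2 - x\<^sup>2"] by (simp add: field_simps)
  finally show ?thesis .
qed

lemma inverse_sqrt_one_minus_square_le_exp:
  fixes u :: real
  assumes "\<bar>u\<bar> \<le> 1/4"
  shows "1 / sqrt (1 - u\<^sup>2) \<le> exp (4 * u\<^sup>2)"
proof -
  have u2: "u\<^sup>2 \<le> 1/16"
    using mult_mono[OF assms assms] by (simp add: power2_eq_square)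
  then have "u\<^sup>2 * u\<^sup>2 \<le> u\<^sup>2 * (1/16)"
    by (intro mult_left_mono) simp_all
  then have "u\<^sup>2 / 2 + (u\<^sup>2)\<^sup>2 \<le> 4 * u\<^sup>2"
    using zero_le_power2[of u] unfolding power2_eq_square[of "u\<^sup>2"] by linarith
  moreover have "1 / sqrt (1 - u\<^sup>2) \<le> exp (u\<^sup>2 / 2 + (u\<^sup>2)\<^sup>2)"
    using u2 by (intro inverse_sqrt_one_minus_le_exp) auto
  ultimately show ?thesis
    by (meson exp_le_cancel_iff order_trans)
qed

lemma exp_neg_div_sqrt_le_exp:
  fixes u :: real
  assumes "\<bar>u\<bar> \<le> 1/4"
  shows "exp (- u) / sqrt (1 - 2 * u) \<le> exp (4 * u\<^sup>2)"
proof -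
  have "1 / sqrt (1 - 2 * u) \<le> exp (2 * u / 2 + (2 * u)\<^sup>2)"
    using assms by (intro inverse_sqrt_one_minus_le_exp) auto
  then have "exp (- u) * (1 / sqrt (1 - 2 * u)) \<le> exp (- u) * exp (u + 4 * u\<^sup>2)"
    by (intro mult_left_mono) (simp_all add: power2_eq_square)
  then show ?thesis
    by (simp flip: exp_add)
qed

lemma product_prob_space_centered_normal:
  assumes "\<delta> > 0"
  shows "product_prob_space (\<lambda>_::'i. centered_normal \<delta>)"
  using prob_space_normal_density[OF assms]
  by (simp add: product_prob_space_def product_prob_space_axioms_def product_sigma_finite_def
      prob_space_imp_sigma_finite)

lemma borel_measurable_PiM_centered_normal_component:
  "q \<in> K \<Longrightarrow> (\<lambda>W. W q) \<in> borel_measurable (PiM K (\<lambda>_. centered_normal \<delta>))"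
  using measurable_component_singleton[of q K "\<lambda>_. centered_normal \<delta>"]
  by (simp add: measurable_cong_sets[OF refl sets_density])

lemma nn_integral_PiM_column_prod:
  fixes f :: "nat \<Rightarrow> real \<Rightarrow> ennreal" and n k :: nat
  assumes "\<delta> > 0" "finite K" "\<And>i. i < n \<Longrightarrow> (i, k) \<in> K"
    and f: "\<And>i. i < n \<Longrightarrow> f i \<in> borel_measurable borel"
  shows "(\<integral>\<^sup>+W. (\<Prod>i<n. f i (W (i, k))) \<partial>PiM K (\<lambda>_. centered_normal \<delta>))
       = (\<Prod>i<n. \<integral>\<^sup>+y. f i y \<partial>centered_normal \<delta>)"
proof -
  interpret product_prob_space "\<lambda>_::nat \<times> nat. centered_normal \<delta>"
    by (rule product_prob_space_centered_normal[OF assms(1)])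
  have column: "(\<Prod>q\<in>K. if q \<in> {..<n} \<times> {k} then h (fst q) else 1) = (\<Prod>i<n. h i)"
    for h :: "nat \<Rightarrow> ennreal"
  proof -
    have "(\<Prod>q\<in>K. if q \<in> {..<n} \<times> {k} then h (fst q) else 1) = (\<Prod>q\<in>{..<n} \<times> {k}. h (fst q))"
      using assms(2,3) by (subst prod.mono_neutral_right[of K "{..<n} \<times> {k}"]) auto
    also have "\<dots> = (\<Prod>i<n. h i)"
      by (rule prod.reindex_bij_witness[where i = "\<lambda>i. (i, k)" and j = fst]) auto
    finally show ?thesis .
  qed
  define g where "g q = (if q \<in> {..<n} \<times> {k} then f (fst q) else (\<lambda>_. 1))" for q
  have "(\<Prod>q\<in>K. g q (W q)) = (\<Prod>i<n. f i (W (i, k)))" for W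
  proof -
    have "(\<Prod>q\<in>K. g q (W q))
        = (\<Prod>q\<in>K. if q \<in> {..<n} \<times> {k} then (\<lambda>i. f i (W (i, k))) (fst q) else 1)"
      by (intro prod.cong) (auto simp: g_def)
    then show ?thesis using column[of "\<lambda>i. f i (W (i, k))"] by simp
  qed
  then have "(\<integral>\<^sup>+W. (\<Prod>i<n. f i (W (i, k))) \<partial>PiM K (\<lambda>_. centered_normal \<delta>))
      = (\<integral>\<^sup>+W. (\<Prod>q\<in>K. g q (W q)) \<partial>PiM K (\<lambda>_. centered_normal \<delta>))"
    by simp
  also have "\<dots> = (\<Prod>q\<in>K. \<integral>\<^sup>+y. g q y \<partial>centered_normal \<delta>)"
    using f by (intro product_nn_integral_prod assms(2)) (auto simp: g_def)
  also have "\<dots> = (\<Prod>i<n. \<integral>\<^sup>+y. f i y \<partial>centered_normal \<delta>)"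
    using column[of "\<lambda>i. \<integral>\<^sup>+y. f i y \<partial>centered_normal \<delta>"]
      prob_space.emeasure_space_1[OF prob_space_normal_density[OF assms(1)]]
    by (auto simp: g_def if_distrib cong: if_cong)
  finally show ?thesis .
qed

lemma centered_normal_linear_form_mgf:
  fixes n k :: nat
  assumes "\<delta> > 0" "finite K" "\<And>i. i < n \<Longrightarrow> (i, k) \<in> K"
  shows "(\<integral>\<^sup>+W. ennreal (exp (l * (\<Sum>i<n. c i * W (i, k)))) \<partial>PiM K (\<lambda>_. centered_normal \<delta>))
       = ennreal (exp (l\<^sup>2 * \<delta>\<^sup>2 * (\<Sum>i<n. (c i)\<^sup>2) / 2))"
proof -
  have "ennreal (exp (l * (\<Sum>i<n. c i * W (i, k)))) = (\<Prod>i<n. ennreal (exp (l * c i * W (i, k))))" for W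
    by (simp add: prod_ennreal sum_distrib_left mult.assoc exp_sum)
  moreover have "(\<Prod>i<n. ennreal (exp ((l * c i)\<^sup>2 * \<delta>\<^sup>2 / 2))) = ennreal (exp (l\<^sup>2 * \<delta>\<^sup>2 * (\<Sum>i<n. (c i)\<^sup>2) / 2))"
    by (simp add: prod_ennreal exp_sum[symmetric] sum_distrib_left sum_divide_distrib
        power_mult_distrib algebra_simps)
  ultimately show ?thesis
    using nn_integral_PiM_column_prod[OF assms, where f = "\<lambda>i y. ennreal (exp (l * c i * y))"]
    by (simp add: centered_normal_mgf[OF assms(1)])
qed

lemma centered_normal_sum_squares_mgf:
  fixes n k :: nat
  assumes "\<delta> > 0" "2 * s * \<delta>\<^sup>2 < 1" "finite K" "\<And>i. i < n \<Longrightarrow> (i, k) \<in> K"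
  shows "(\<integral>\<^sup>+W. ennreal (exp (s * (\<Sum>i<n. (W (i, k))\<^sup>2))) \<partial>PiM K (\<lambda>_. centered_normal \<delta>))
       = ennreal ((1 / sqrt (1 - 2 * s * \<delta>\<^sup>2)) ^ n)"
proof -
  have "ennreal (exp (s * (\<Sum>i<n. (W (i, k))\<^sup>2))) = (\<Prod>i<n. ennreal (exp (s * (W (i, k))\<^sup>2)))" for W
    by (simp add: prod_ennreal exp_sum[symmetric] sum_distrib_left)
  then show ?thesis
    using nn_integral_PiM_column_prod[OF assms(1,3,4), where f = "\<lambda>i y. ennreal (exp (s * y\<^sup>2))"] assms(2)
    by (simp add: centered_normal_square_mgf[OF assms(1,2)] prod_ennreal ennreal_power)
qed

section \<open>The noise matrix\<close>

lemma prob_space_noise_measure: "\<delta> > 0 \<Longrightarrow> prob_space (noise_measure n p \<delta>)"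
  unfolding noise_measure_def by (intro prob_space_PiM prob_space_normal_density)

lemma borel_measurable_noise_entry:
  "i < n \<Longrightarrow> j < p \<Longrightarrow> (\<lambda>W. W (i, j)) \<in> borel_measurable (noise_measure n p \<delta>)"
  unfolding noise_measure_def by (intro borel_measurable_PiM_centered_normal_component) simp

lemma borel_measurable_noise_linear_form:
  "k < p \<Longrightarrow> (\<lambda>W. \<Sum>i<n. c i * W (i, k)) \<in> borel_measurable (noise_measure n p \<delta>)"
  by (intro borel_measurable_sum borel_measurable_times borel_measurable_const borel_measurable_noise_entry)
    auto

lemma centered_normal_cross_product_mgf:
  fixes n p j k :: nat
  assumes "\<delta> > 0" "j \<noteq> k" "j < p" "k < p" "l\<^sup>2 * \<delta>^4 < 1"
  shows "(\<integral>\<^sup>+W. ennreal (exp (l * (\<Sum>i<n. W (i, j) * W (i, k)))) \<partial>noise_measure n p \<delta>)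
       = ennreal ((1 / sqrt (1 - l\<^sup>2 * \<delta>^4)) ^ n)"
proof -
  interpret product_prob_space "\<lambda>_::nat \<times> nat. centered_normal \<delta>"
    by (rule product_prob_space_centered_normal[OF assms(1)])
  define J where "J = {..<n} \<times> {j}"
  define I where "I = {..<n} \<times> {..<p} - J"
  have IJ: "I \<union> J = {..<n} \<times> {..<p}" "I \<inter> J = {}" "finite I" "finite J"
    using assms(3) by (auto simp: I_def J_def)
  have [measurable]: "(\<lambda>W. W (i, j')) \<in> borel_measurable (PiM (I \<union> J) (\<lambda>_. centered_normal \<delta>))"
    if "i < n" "j' < p" for i j'
    using that by (intro borel_measurable_PiM_centered_normal_component) (simp add: IJ(1))
  \<comment> \<open>integrate out column j first: conditionally on column k the sum is a Gaussian linear form\<close>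
  have "(\<integral>\<^sup>+W. ennreal (exp (l * (\<Sum>i<n. W (i, j) * W (i, k)))) \<partial>noise_measure n p \<delta>)
      = (\<integral>\<^sup>+x. (\<integral>\<^sup>+y. ennreal (exp (l * (\<Sum>i<n. merge I J (x, y) (i, j) * merge I J (x, y) (i, k))))
           \<partial>PiM J (\<lambda>_. centered_normal \<delta>)) \<partial>PiM I (\<lambda>_. centered_normal \<delta>))"
    unfolding noise_measure_def IJ(1)[symmetric] using assms(3,4)
    by (intro product_nn_integral_fold IJ) measurable
  also have "\<dots> = (\<integral>\<^sup>+x. (\<integral>\<^sup>+y. ennreal (exp (l * (\<Sum>i<n. x (i, k) * y (i, j))))
           \<partial>PiM J (\<lambda>_. centered_normal \<delta>)) \<partial>PiM I (\<lambda>_. centered_normal \<delta>))"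
    using assms(2,4) by (intro nn_integral_cong arg_cong[where f = "\<lambda>x. ennreal (exp (l * x))"] sum.cong)
      (auto simp: merge_def I_def J_def)
  also have "\<dots> = (\<integral>\<^sup>+x. ennreal (exp ((l\<^sup>2 * \<delta>\<^sup>2 / 2) * (\<Sum>i<n. (x (i, k))\<^sup>2))) \<partial>PiM I (\<lambda>_. centered_normal \<delta>))"
    using centered_normal_linear_form_mgf[OF assms(1) IJ(4), of n j l]
    by (intro nn_integral_cong) (simp add: J_def mult_ac)
  also have "\<dots> = ennreal ((1 / sqrt (1 - 2 * (l\<^sup>2 * \<delta>\<^sup>2 / 2) * \<delta>\<^sup>2)) ^ n)"
    using assms by (intro centered_normal_sum_squares_mgf IJ)
      (auto simp: I_def J_def power2_eq_square power4_eq_xxxx mult_ac)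
  finally show ?thesis by (simp add: power2_eq_square power4_eq_xxxx mult_ac)
qed

definition centered_noise_gram :: "nat \<Rightarrow> real \<Rightarrow> (nat \<times> nat \<Rightarrow> real) \<Rightarrow> nat \<Rightarrow> nat \<Rightarrow> real" where
  "centered_noise_gram n \<delta> W j k = (\<Sum>i<n. W (i, j) * W (i, k)) - (if j = k then real n * \<delta>\<^sup>2 else 0)"

lemma borel_measurable_centered_noise_gram:
  "j < p \<Longrightarrow> k < p \<Longrightarrow> (\<lambda>W. centered_noise_gram n \<delta> W j k) \<in> borel_measurable (noise_measure n p \<delta>')"
  unfolding centered_noise_gram_def
  by (intro borel_measurable_diff borel_measurable_sum borel_measurable_times borel_measurable_noise_entry
      borel_measurable_const) auto

lemma centered_noise_gram_diagonal_mgf: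
  fixes n p j :: nat
  assumes "\<delta> > 0" "j < p" "2 * u < 1"
  shows "(\<integral>\<^sup>+W. ennreal (exp (u / \<delta>\<^sup>2 * centered_noise_gram n \<delta> W j j)) \<partial>noise_measure n p \<delta>)
       = ennreal ((exp (- u) / sqrt (1 - 2 * u)) ^ n)"
proof -
  have [measurable]: "(\<lambda>W. W (i, j)) \<in> borel_measurable (noise_measure n p \<delta>)" if "i < n" for i
    using that assms(2) by (intro borel_measurable_noise_entry)
  have exponent: "u / \<delta>\<^sup>2 * centered_noise_gram n \<delta> W j j = real n * (- u) + u / \<delta>\<^sup>2 * (\<Sum>i<n. (W (i, j))\<^sup>2)"
    for W
    using assms(1) by (simp add: centered_noise_gram_def power2_eq_square field_simps)
  have "ennreal (exp (u / \<delta>\<^sup>2 * centered_noise_gram n \<delta> W j j))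
      = ennreal (exp (- u) ^ n) * ennreal (exp (u / \<delta>\<^sup>2 * (\<Sum>i<n. (W (i, j))\<^sup>2)))" for W
    by (simp only: exponent exp_add exp_of_nat_mult) (simp add: ennreal_mult')
  then have "(\<integral>\<^sup>+W. ennreal (exp (u / \<delta>\<^sup>2 * centered_noise_gram n \<delta> W j j)) \<partial>noise_measure n p \<delta>)
      = ennreal (exp (- u) ^ n)
        * (\<integral>\<^sup>+W. ennreal (exp (u / \<delta>\<^sup>2 * (\<Sum>i<n. (W (i, j))\<^sup>2))) \<partial>noise_measure n p \<delta>)"
    by (simp add: nn_integral_cmult)
  also have "\<dots> = ennreal (exp (- u) ^ n) * ennreal ((1 / sqrt (1 - 2 * u)) ^ n)"
    using centered_normal_sum_squares_mgf[OF assms(1), of "u / \<delta>\<^sup>2" "{..<n} \<times> {..<p}" n j] assms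
    by (simp add: noise_measure_def)
  also have "\<dots> = ennreal ((exp (- u) / sqrt (1 - 2 * u)) ^ n)"
    by (simp add: power_divide ennreal_mult'[symmetric])
  finally show ?thesis .
qed

lemma centered_noise_gram_mgf:
  fixes n p j k :: nat
  assumes "\<delta> > 0" "j < p" "k < p" "\<bar>u\<bar> \<le> 1/4"
  shows "(\<integral>\<^sup>+W. ennreal (exp (u / \<delta>\<^sup>2 * centered_noise_gram n \<delta> W j k)) \<partial>noise_measure n p \<delta>)
       \<le> ennreal (exp (4 * real n * u\<^sup>2))"
proof -
  obtain b where b: "(\<integral>\<^sup>+W. ennreal (exp (u / \<delta>\<^sup>2 * centered_noise_gram n \<delta> W j k)) \<partial>noise_measure n p \<delta>)
      = ennreal (b ^ n)" "0 \<le> b" "b \<le> exp (4 * u\<^sup>2)"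
  proof (cases "j = k")
    case False
    have "(u / \<delta>\<^sup>2)\<^sup>2 * \<delta>^4 = u\<^sup>2"
      using assms(1) by (simp add: power_divide power2_eq_square power4_eq_xxxx)
    moreover have "u\<^sup>2 < 1"
      using mult_mono[OF assms(4) assms(4)] by (simp add: power2_eq_square)
    ultimately show ?thesis
      using centered_normal_cross_product_mgf[OF assms(1) False assms(2,3), of "u / \<delta>\<^sup>2" n]
        inverse_sqrt_one_minus_square_le_exp[OF assms(4)]
      by (intro that[of "1 / sqrt (1 - u\<^sup>2)"]) (simp_all add: centered_noise_gram_def False)
  next
    case True
    show ?thesis
      using centered_noise_gram_diagonal_mgf[OF assms(1,2), of u n] exp_neg_div_sqrt_le_exp[OF assms(4)] assms(4)
      by (intro that[of "exp (- u) / sqrt (1 - 2 * u)"]) (simp_all add: True)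
  qed
  have "exp (4 * real n * u\<^sup>2) = exp (4 * u\<^sup>2) ^ n"
    by (simp add: exp_of_nat_mult[symmetric] mult_ac)
  then show ?thesis
    using b by (simp add: ennreal_leI power_mono)
qed

lemma noise_linear_form_tail:
  fixes n p k :: nat
  assumes "\<delta> > 0" "k < p" "V > 0" "(\<Sum>i<n. (c i)\<^sup>2) \<le> V" "t > 0"
  shows "measure (noise_measure n p \<delta>) {W \<in> space (noise_measure n p \<delta>). t \<le> \<bar>\<Sum>i<n. c i * W (i, k)\<bar>}
       \<le> 2 * exp (- (t\<^sup>2 / (2 * (\<delta>\<^sup>2 * V))))"
proof -
  note meas = borel_measurable_noise_linear_form[OF assms(2)]
  have tail: "emeasure (noise_measure n p \<delta>) {W \<in> space (noise_measure n p \<delta>). t \<le> (\<Sum>i<n. d i * W (i, k))}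
      \<le> ennreal (exp (- (t\<^sup>2 / (2 * (\<delta>\<^sup>2 * V)))))" if "(\<Sum>i<n. (d i)\<^sup>2) \<le> V" for d
  proof (rule subgaussian_tail[OF meas])
    fix l :: real
    have "(\<integral>\<^sup>+W. ennreal (exp (l * (\<Sum>i<n. d i * W (i, k)))) \<partial>noise_measure n p \<delta>)
        = ennreal (exp (l\<^sup>2 * \<delta>\<^sup>2 * (\<Sum>i<n. (d i)\<^sup>2) / 2))"
      unfolding noise_measure_def using assms(1,2) by (intro centered_normal_linear_form_mgf) auto
    also have "\<dots> \<le> ennreal (exp (l\<^sup>2 * (\<delta>\<^sup>2 * V) / 2))"
      using mult_left_mono[OF that, of "l\<^sup>2 * \<delta>\<^sup>2"] by (simp add: mult.assoc)
    finally show "(\<integral>\<^sup>+W. ennreal (exp (l * (\<Sum>i<n. d i * W (i, k)))) \<partial>noise_measure n p \<delta>)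
        \<le> ennreal (exp (l\<^sup>2 * (\<delta>\<^sup>2 * V) / 2))" .
  qed (use assms in simp_all)
  show ?thesis
  proof (rule measure_abs_ge_le[OF _ meas])
    show "finite_measure (noise_measure n p \<delta>)"
      using prob_space_noise_measure[OF assms(1)] by (rule prob_space.finite_measure)
    show "emeasure (noise_measure n p \<delta>) {W \<in> space (noise_measure n p \<delta>). t \<le> - (\<Sum>i<n. c i * W (i, k))}
        \<le> ennreal (exp (- (t\<^sup>2 / (2 * (\<delta>\<^sup>2 * V)))))"
      using tail[of "\<lambda>i. - c i"] assms(4) by (simp add: sum_negf)
  qed (use tail assms(4) in simp_all)
qed

lemma centered_noise_gram_tail:
  fixes n p j k :: nat
  assumes "\<delta> > 0" "j < p" "k < p" "n \<ge> 1" "L > 0"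
  shows "measure (noise_measure n p \<delta>) {W \<in> space (noise_measure n p \<delta>).
           real n * (20 * \<delta>\<^sup>2 * (sqrt (L / real n) + L / real n)) \<le> \<bar>centered_noise_gram n \<delta> W j k\<bar>}
       \<le> 2 * exp (- L)"
proof -
  have meas: "(\<lambda>W. centered_noise_gram n \<delta> W j k) \<in> borel_measurable (noise_measure n p \<delta>)"
    using assms(2,3) by (rule borel_measurable_centered_noise_gram)
  have tail: "emeasure (noise_measure n p \<delta>) {W \<in> space (noise_measure n p \<delta>).
      real n * (20 * \<delta>\<^sup>2 * (sqrt (L / real n) + L / real n)) \<le> s * centered_noise_gram n \<delta> W j k}
      \<le> ennreal (exp (- L))" if "\<bar>s\<bar> = 1" for s
  proof (rule subexponential_tail)
    fix u :: real
    assume "0 < u" "u \<le> 1/4"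
    then have "(\<integral>\<^sup>+W. ennreal (exp ((s * u) / \<delta>\<^sup>2 * centered_noise_gram n \<delta> W j k)) \<partial>noise_measure n p \<delta>)
        \<le> ennreal (exp (4 * real n * (s * u)\<^sup>2))"
      using assms(1-3) that by (intro centered_noise_gram_mgf) (auto simp: abs_mult)
    moreover have "(s * u)\<^sup>2 = u\<^sup>2"
      using that power2_abs[of s] by (simp add: power_mult_distrib)
    ultimately show "(\<integral>\<^sup>+W. ennreal (exp (u / \<delta>\<^sup>2 * (s * centered_noise_gram n \<delta> W j k))) \<partial>noise_measure n p \<delta>)
        \<le> ennreal (exp (4 * real n * u\<^sup>2))"
      by (simp add: mult_ac)
  qed (use meas assms in simp_all)
  show ?thesis
    using tail[of 1] tail[of "-1"] prob_space.finite_measure[OF prob_space_noise_measure[OF assms(1)]]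
    by (intro measure_abs_ge_le[OF _ meas]) simp_all
qed

section \<open>Inverses of principal submatrices\<close>

text \<open>Submatrices indexed by a finite S are moved along a bijection h : {0..<m} \<rightarrow> S to
  Jordan_Normal_Form matrices, so that their inverses can be written with the adjugate.\<close>

definition reindexed_mat :: "(nat \<Rightarrow> nat) \<Rightarrow> nat \<Rightarrow> (nat \<Rightarrow> nat \<Rightarrow> real) \<Rightarrow> real Matrix.mat" where
  "reindexed_mat h m A = Matrix.mat m m (\<lambda>(a, b). A (h a) (h b))"

definition reindexed_inverse :: "(nat \<Rightarrow> nat) \<Rightarrow> nat \<Rightarrow> (nat \<Rightarrow> nat \<Rightarrow> real) \<Rightarrow> real Matrix.mat" where
  "reindexed_inverse h m A = (1 / Determinant.det (reindexed_mat h m A)) \<cdot>\<^sub>m adj_mat (reindexed_mat h m A)"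

lemma reindexed_mat_carrier [simp]: "reindexed_mat h m A \<in> carrier_mat m m"
  by (simp add: reindexed_mat_def)

lemma reindexed_mat_dim [simp]: "dim_row (reindexed_mat h m A) = m" "dim_col (reindexed_mat h m A) = m"
  by (simp_all add: reindexed_mat_def)

lemma reindexed_mat_index [simp]: "a < m \<Longrightarrow> b < m \<Longrightarrow> reindexed_mat h m A $$ (a, b) = A (h a) (h b)"
  by (simp add: reindexed_mat_def)

lemma reindexed_inverse_carrier [simp]: "reindexed_inverse h m A \<in> carrier_mat m m"
  using adj_mat(1)[OF reindexed_mat_carrier] by (simp add: reindexed_inverse_def)

lemma reindexed_inverse_is_inverse:
  assumes "Determinant.det (reindexed_mat h m A) \<noteq> 0"
  shows "reindexed_mat h m A * reindexed_inverse h m A = 1\<^sub>m m"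
    and "reindexed_inverse h m A * reindexed_mat h m A = 1\<^sub>m m"
  using assms adj_mat[OF reindexed_mat_carrier[of h m A]]
  by (auto simp: reindexed_inverse_def mult_smult_distrib[OF reindexed_mat_carrier]
      mult_smult_assoc_mat[OF _ reindexed_mat_carrier])

lemma reindexed_mat_mult_index:
  assumes "bij_betw h {0..<m} S" "a < m" "b < m"
  shows "(reindexed_mat h m A * reindexed_mat h m B) $$ (a, b) = mat_mult S A B (h a) (h b)"
proof -
  have "(reindexed_mat h m A * reindexed_mat h m B) $$ (a, b) = (\<Sum>i\<in>{0..<m}. A (h a) (h i) * B (h i) (h b))"
    using assms(2,3) by (simp add: index_mult_mat scalar_prod_def)
  also have "\<dots> = mat_mult S A B (h a) (h b)"
    unfolding mat_mult_def by (rule sum.reindex_bij_betw[OF assms(1)])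
  finally show ?thesis .
qed

lemma is_sub_inverse_iff_reindexed:
  assumes bij: "bij_betw h {0..<m} S"
  shows "is_sub_inverse S A B \<longleftrightarrow>
    reindexed_mat h m A * reindexed_mat h m B = 1\<^sub>m m \<and> reindexed_mat h m B * reindexed_mat h m A = 1\<^sub>m m"
proof -
  have quant: "(\<forall>i\<in>S. \<forall>j\<in>S. P i j) \<longleftrightarrow> (\<forall>a<m. \<forall>b<m. P (h a) (h b))" for P
    using bij by (auto simp: bij_betw_def)
  have unit: "C = 1\<^sub>m m \<longleftrightarrow> (\<forall>a<m. \<forall>b<m. C $$ (a, b) = (if h a = h b then 1 else 0))"
    if "C \<in> carrier_mat m m" for C :: "real Matrix.mat"
  proof -
    have "h a = h b \<longleftrightarrow> a = b" if "a < m" "b < m" for a b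
      using bij that by (auto simp: bij_betw_def inj_on_def)
    then show ?thesis
      using that by (auto intro!: eq_matI)
  qed
  show ?thesis
    unfolding is_sub_inverse_def quant unit[OF mult_carrier_mat[OF reindexed_mat_carrier reindexed_mat_carrier]]
    by (auto simp: reindexed_mat_mult_index[OF bij] simp del: index_mult_mat)
qed

lemma reindexed_mat_of_index:
  assumes "bij_betw h {0..<m} S" "C \<in> carrier_mat m m"
  shows "reindexed_mat h m (\<lambda>k j. C $$ (the_inv_into {0..<m} h k, the_inv_into {0..<m} h j)) = C"
  using assms by (intro eq_matI) (auto simp: bij_betw_def the_inv_into_f_f)

lemma sub_invertible_iff_det:
  assumes bij: "bij_betw h {0..<m} S"
  shows "sub_invertible S A \<longleftrightarrow> Determinant.det (reindexed_mat h m A) \<noteq> 0"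
proof
  assume "sub_invertible S A"
  then obtain B where "is_sub_inverse S A B" unfolding sub_invertible_def by blast
  then have "reindexed_mat h m A * reindexed_mat h m B = 1\<^sub>m m"
    using is_sub_inverse_iff_reindexed[OF bij] by blast
  then have "Determinant.det (reindexed_mat h m A) * Determinant.det (reindexed_mat h m B) = 1"
    by (metis det_mult[OF reindexed_mat_carrier reindexed_mat_carrier] det_one)
  then show "Determinant.det (reindexed_mat h m A) \<noteq> 0" by auto
next
  assume "Determinant.det (reindexed_mat h m A) \<noteq> 0"
  then have "is_sub_inverse S A (\<lambda>k j. reindexed_inverse h m A $$ (the_inv_into {0..<m} h k, the_inv_into {0..<m} h j))"
    unfolding is_sub_inverse_iff_reindexed[OF bij] reindexed_mat_of_index[OF bij reindexed_inverse_carrier]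
    using reindexed_inverse_is_inverse by blast
  then show "sub_invertible S A" unfolding sub_invertible_def by blast
qed

lemma sub_inv_eq_reindexed_inverse:
  assumes bij: "bij_betw h {0..<m} S" and det: "Determinant.det (reindexed_mat h m A) \<noteq> 0"
    and "k \<in> S" "j \<in> S"
  shows "sub_inv S A k j = reindexed_inverse h m A $$ (the_inv_into {0..<m} h k, the_inv_into {0..<m} h j)"
proof -
  have "is_sub_inverse S A (sub_inv S A)"
    using sub_invertible_iff_det[OF bij] det unfolding sub_invertible_def sub_inv_def by (metis someI_ex)
  then have left: "reindexed_mat h m (sub_inv S A) * reindexed_mat h m A = 1\<^sub>m m"
    using is_sub_inverse_iff_reindexed[OF bij] by blast
  have "reindexed_mat h m (sub_inv S A)
      = reindexed_mat h m (sub_inv S A) * (reindexed_mat h m A * reindexed_inverse h m A)"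
    using reindexed_inverse_is_inverse(1)[OF det] by simp
  also have "\<dots> = reindexed_inverse h m A"
    by (simp add: assoc_mult_mat[OF reindexed_mat_carrier reindexed_mat_carrier reindexed_inverse_carrier,
          symmetric] left left_mult_one_mat[OF reindexed_inverse_carrier])
  finally have "reindexed_mat h m (sub_inv S A) = reindexed_inverse h m A" .
  moreover have "the_inv_into {0..<m} h i < m" "h (the_inv_into {0..<m} h i) = i" if "i \<in> S" for i
    using bij that by (auto simp: bij_betw_def the_inv_into_f_f f_the_inv_into_f)
  ultimately show ?thesis
    using assms(3,4) reindexed_mat_index[of "the_inv_into {0..<m} h k" m "the_inv_into {0..<m} h j" h "sub_inv S A"]
    by simp
qed

lemma borel_measurable_det:
  assumes "\<And>w. D w \<in> carrier_mat d d"
    and "\<And>a b. a < d \<Longrightarrow> b < d \<Longrightarrow> (\<lambda>w. D w $$ (a, b)) \<in> borel_measurable M"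
  shows "(\<lambda>w. Determinant.det (D w) :: real) \<in> borel_measurable M"
proof -
  have "(\<lambda>w. Determinant.det (D w))
      = (\<lambda>w. \<Sum>\<pi> \<in> {\<pi>. \<pi> permutes {0..<d}}. signof \<pi> * (\<Prod>i = 0..<d. D w $$ (i, \<pi> i)))"
    using det_def'[OF assms(1)] by simp
  also have "\<dots> \<in> borel_measurable M"
    using assms(2) permutes_in_image[of _ "{0..<d}"]
    by (intro borel_measurable_sum borel_measurable_times borel_measurable_const borel_measurable_prod) auto
  finally show ?thesis .
qed

lemma borel_measurable_adj_mat_index:
  assumes "\<And>w. D w \<in> carrier_mat d d"
    and "\<And>a b. a < d \<Longrightarrow> b < d \<Longrightarrow> (\<lambda>w. D w $$ (a, b)) \<in> borel_measurable M"
    and "a < d" "b < d"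
  shows "(\<lambda>w. adj_mat (D w) $$ (a, b) :: real) \<in> borel_measurable M"
proof -
  have "(\<lambda>w. adj_mat (D w) $$ (a, b)) = (\<lambda>w. (-1) ^ (b + a) * Determinant.det (mat_delete (D w) b a))"
    using assms(3,4) by (simp add: adj_mat_def cofactor_def carrier_matD[OF assms(1)])
  also have "\<dots> \<in> borel_measurable M"
  proof (intro borel_measurable_times borel_measurable_const borel_measurable_det[where d = "d - 1"])
    show "mat_delete (D w) b a \<in> carrier_mat (d - 1) (d - 1)" for w
      by (rule mat_delete_carrier[OF assms(1)])
    fix a' b' assume "a' < d - 1" "b' < d - 1"
    then have "(\<lambda>w. mat_delete (D w) b a $$ (a', b'))
        = (\<lambda>w. D w $$ (if a' < b then a' else Suc a', if b' < a then b' else Suc b'))"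
      by (simp add: mat_delete_def carrier_matD[OF assms(1)])
    also have "\<dots> \<in> borel_measurable M"
      using \<open>a' < d - 1\<close> \<open>b' < d - 1\<close> by (intro assms(2)) auto
    finally show "(\<lambda>w. mat_delete (D w) b a $$ (a', b')) \<in> borel_measurable M" .
  qed
  finally show ?thesis .
qed

lemma borel_measurable_reindexed_inverse_index:
  assumes "\<And>a b. a < m \<Longrightarrow> b < m \<Longrightarrow> (\<lambda>w. F w (h a) (h b)) \<in> borel_measurable M"
    and "a < m" "b < m"
  shows "(\<lambda>w. reindexed_inverse h m (F w) $$ (a, b)) \<in> borel_measurable M"
proof -
  have "(\<lambda>w. reindexed_inverse h m (F w) $$ (a, b))
      = (\<lambda>w. 1 / Determinant.det (reindexed_mat h m (F w)) * adj_mat (reindexed_mat h m (F w)) $$ (a, b))"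
    using assms(2,3) carrier_matD[OF adj_mat(1)[OF reindexed_mat_carrier]]
    by (simp add: reindexed_inverse_def del: times_divide_eq_left)
  also have "\<dots> \<in> borel_measurable M"
    using assms by (intro borel_measurable_times borel_measurable_divide borel_measurable_const
        borel_measurable_det[where d = m] borel_measurable_adj_mat_index[where d = m]) auto
  finally show ?thesis .
qed

lemma inf_norm_cong:
  "(\<And>i j. i \<in> I \<Longrightarrow> j \<in> J \<Longrightarrow> A i j = B i j) \<Longrightarrow> inf_norm I J A = inf_norm I J B"
  unfolding inf_norm_def by (intro if_cong refl arg_cong[where f = Max] image_cong sum.cong) auto

lemma borel_measurable_inf_norm:
  assumes "finite I" "\<And>i j. i \<in> I \<Longrightarrow> j \<in> J \<Longrightarrow> (\<lambda>w. A w i j) \<in> borel_measurable M"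
  shows "(\<lambda>w. inf_norm I J (A w)) \<in> borel_measurable M"
  unfolding inf_norm_def using assms
  by (cases "I = {}") (auto intro!: borel_measurable_Max borel_measurable_sum borel_measurable_abs)

lemma sets_sub_invertible_irrep_le:
  fixes F :: "'w \<Rightarrow> nat \<Rightarrow> nat \<Rightarrow> real"
  assumes "S \<subseteq> {..<p}"
    and F: "\<And>i j. i < p \<Longrightarrow> j < p \<Longrightarrow> (\<lambda>w. F w i j) \<in> borel_measurable M"
  shows "{w \<in> space M. sub_invertible S (F w) \<and> irrep p S (F w) \<le> c} \<in> sets M"
proof -
  obtain m :: nat and h where bij: "bij_betw h {0..<m} S"
    using ex_bij_betw_nat_finite finite_subset[OF assms(1)] by blast
  define hinv where "hinv = the_inv_into {0..<m} h"
  have h: "h a \<in> S" if "a < m" for a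
    using bij that by (auto simp: bij_betw_def)
  have hinv: "hinv k < m" if "k \<in> S" for k
    using bij that by (auto simp: bij_betw_def hinv_def the_inv_into_f_f)
  have entries: "(\<lambda>w. F w (h a) (h b)) \<in> borel_measurable M" if "a < m" "b < m" for a b
    using assms(1) h that by (intro F) auto
  define g where "g w = inf_norm ({..<p} - S) S
    (\<lambda>i j. \<Sum>k\<in>S. F w i k * reindexed_inverse h m (F w) $$ (hinv k, hinv j))" for w
  have "(\<lambda>w. Determinant.det (reindexed_mat h m (F w))) \<in> borel_measurable M"
    using entries by (intro borel_measurable_det[where d = m]) auto
  moreover have "g \<in> borel_measurable M"
    unfolding g_def using assms(1) hinv
    by (intro borel_measurable_inf_norm borel_measurable_sum borel_measurable_times F
        borel_measurable_reindexed_inverse_index[where F = F and h = h and m = m, OF entries]) auto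
  moreover have "sub_invertible S (F w) \<and> irrep p S (F w) \<le> c
      \<longleftrightarrow> Determinant.det (reindexed_mat h m (F w)) \<noteq> 0 \<and> g w \<le> c" for w
    unfolding sub_invertible_iff_det[OF bij] g_def irrep_def mat_mult_def hinv_def
    using sub_inv_eq_reindexed_inverse[OF bij] by (auto cong: inf_norm_cong sum.cong)
  ultimately show ?thesis
    by simp
qed

section \<open>Concentration of the corrected Gram matrix\<close>

lemma borel_measurable_noisy_gram:
  "j < p \<Longrightarrow> k < p \<Longrightarrow> (\<lambda>W. noisy_gram n \<delta> X W j k) \<in> borel_measurable (noise_measure n p \<delta>')"
  unfolding noisy_gram_def
  by (intro borel_measurable_diff borel_measurable_times borel_measurable_const borel_measurable_sum
      borel_measurable_add borel_measurable_noise_entry) auto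

lemma noisy_gram_minus_gram:
  assumes "n \<ge> 1"
  shows "noisy_gram n \<delta> X W j k - gram n X j k
    = (\<Sum>i<n. X i j / n * W (i, k)) + (\<Sum>i<n. X i k / n * W (i, j)) + centered_noise_gram n \<delta> W j k / n"
proof -
  have "(\<Sum>i<n. (X i j + W (i, j)) * (X i k + W (i, k)))
      = (\<Sum>i<n. X i j * X i k) + (\<Sum>i<n. X i j * W (i, k)) + (\<Sum>i<n. X i k * W (i, j))
        + (\<Sum>i<n. W (i, j) * W (i, k))"
    by (simp add: sum.distrib algebra_simps)
  then show ?thesis
    using assms by (simp add: noisy_gram_def gram_def centered_noise_gram_def sum_divide_distrib[symmetric]
        field_simps)
qed

lemma inf_norm_le_card_mult:
  assumes "finite I" "b \<ge> 0" "\<And>i j. i \<in> I \<Longrightarrow> j \<in> J \<Longrightarrow> \<bar>A i j\<bar> \<le> b"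
  shows "inf_norm I J A \<le> real (card J) * b"
  using assms sum_bounded_above[of J "\<lambda>j. \<bar>A _ j\<bar>" b]
  by (auto simp: inf_norm_def)

lemma inf_norm_noisy_gram_minus_gram_le:
  assumes "n \<ge> 1" "t \<ge> 0" "t' \<ge> 0"
    and linear: "\<And>j k. j < p \<Longrightarrow> k < p \<Longrightarrow> \<bar>\<Sum>i<n. X i j / n * W (i, k)\<bar> \<le> t"
    and quadratic: "\<And>j k. j < p \<Longrightarrow> k < p \<Longrightarrow> \<bar>centered_noise_gram n \<delta> W j k\<bar> \<le> real n * t'"
  shows "inf_norm {..<p} {..<p} (\<lambda>j k. noisy_gram n \<delta> X W j k - gram n X j k) \<le> real p * (2 * t + t')"
proof -
  have "\<bar>noisy_gram n \<delta> X W j k - gram n X j k\<bar> \<le> 2 * t + t'" if "j < p" "k < p" for j k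
  proof -
    have "\<bar>centered_noise_gram n \<delta> W j k / n\<bar> \<le> t'"
      using quadratic[OF that] assms(1) by (simp add: abs_divide field_simps)
    then show ?thesis
      using noisy_gram_minus_gram[OF assms(1), of \<delta> X W j k] linear[OF that] linear[OF that(2,1)]
      by linarith
  qed
  then show ?thesis
    using inf_norm_le_card_mult[where I = "{..<p}" and J = "{..<p}" and b = "2 * t + t'"] assms(2,3) by simp
qed

lemma noisy_gram_entry_tail:
  fixes n p j k :: nat
  assumes "n \<ge> 1" "M > 0" "\<delta> > 0" "j < p" "k < p" "1 / real n * (\<Sum>i<n. (X i j)\<^sup>2) \<le> M\<^sup>2" "L > 0"
  shows "measure (noise_measure n p \<delta>) {W \<in> space (noise_measure n p \<delta>).
      M * sqrt (2 * \<delta>\<^sup>2 * L / n) \<le> \<bar>\<Sum>i<n. X i j / n * W (i, k)\<bar>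
      \<or> real n * (20 * \<delta>\<^sup>2 * (sqrt (L / n) + L / n)) \<le> \<bar>centered_noise_gram n \<delta> W j k\<bar>}
    \<le> 4 * exp (- L)"
proof -
  let ?P = "noise_measure n p \<delta>"
  let ?A = "{W \<in> space ?P. M * sqrt (2 * \<delta>\<^sup>2 * L / n) \<le> \<bar>\<Sum>i<n. X i j / n * W (i, k)\<bar>}"
  let ?B = "{W \<in> space ?P. real n * (20 * \<delta>\<^sup>2 * (sqrt (L / n) + L / n)) \<le> \<bar>centered_noise_gram n \<delta> W j k\<bar>}"
  interpret prob_space ?P by (rule prob_space_noise_measure[OF assms(3)])
  have [measurable]: "(\<lambda>W. \<Sum>i<n. X i j / n * W (i, k)) \<in> borel_measurable ?P"
    "(\<lambda>W. centered_noise_gram n \<delta> W j k) \<in> borel_measurable ?P"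
    by (rule borel_measurable_noise_linear_form[OF assms(5)], rule borel_measurable_centered_noise_gram[OF assms(4,5)])
  have n: "real n > 0" using assms(1) by simp
  have "(\<Sum>i<n. (X i j / n)\<^sup>2) = (1 / real n * (\<Sum>i<n. (X i j)\<^sup>2)) / n"
    by (simp add: power_divide sum_divide_distrib power2_eq_square)
  also have "\<dots> \<le> M\<^sup>2 / n"
    by (rule divide_right_mono[OF assms(6)]) simp
  finally have column: "(\<Sum>i<n. (X i j / n)\<^sup>2) \<le> M\<^sup>2 / n" .
  have tail: "prob ?A \<le> 2 * exp (- ((M * sqrt (2 * \<delta>\<^sup>2 * L / n))\<^sup>2 / (2 * (\<delta>\<^sup>2 * (M\<^sup>2 / n)))))"
    using assms(2,3,7) n by (intro noise_linear_form_tail[OF assms(3,5) _ column]) simp_all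
  have exponent: "(M * sqrt (2 * \<delta>\<^sup>2 * L / n))\<^sup>2 / (2 * (\<delta>\<^sup>2 * (M\<^sup>2 / n))) = L"
    using assms n by (simp add: power_mult_distrib field_simps)
  from tail have A: "prob ?A \<le> 2 * exp (- L)"
    unfolding exponent .
  have B: "prob ?B \<le> 2 * exp (- L)"
    by (rule centered_noise_gram_tail[OF assms(3,4,5,1,7)])
  have "?A \<in> sets ?P" "?B \<in> sets ?P"
    by measurable measurable
  then have "prob (?A \<union> ?B) \<le> prob ?A + prob ?B"
    by (intro measure_subadditive) (simp_all add: emeasure_eq_measure)
  moreover have "{W \<in> space ?P. M * sqrt (2 * \<delta>\<^sup>2 * L / n) \<le> \<bar>\<Sum>i<n. X i j / n * W (i, k)\<bar>
      \<or> real n * (20 * \<delta>\<^sup>2 * (sqrt (L / n) + L / n)) \<le> \<bar>centered_noise_gram n \<delta> W j k\<bar>} = ?A \<union> ?B"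
    by blast
  ultimately show ?thesis
    using A B by simp
qed

lemma noisy_gram_close_prob:
  fixes n p :: nat
  assumes "n \<ge> 1" "M > 0" and X: "\<forall>j<p. 1 / real n * (\<Sum>i<n. (X i j)\<^sup>2) \<le> M\<^sup>2"
    and "\<delta> > 0" "p \<ge> 1" "0 < \<alpha>" "\<alpha> < 1"
  defines "L \<equiv> ln (4 * (real p)\<^sup>2 / \<alpha>)"
  assumes \<epsilon>: "real p * (2 * M * sqrt (2 * \<delta>\<^sup>2 * L / n) + 20 * \<delta>\<^sup>2 * (sqrt (L / n) + L / n)) \<le> \<epsilon>"
  shows "1 - \<alpha> \<le> measure (noise_measure n p \<delta>) {W \<in> space (noise_measure n p \<delta>).
    inf_norm {..<p} {..<p} (\<lambda>j k. noisy_gram n \<delta> X W j k - gram n X j k) \<le> \<epsilon>}"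
    (is "_ \<le> measure _ ?good")
proof -
  let ?P = "noise_measure n p \<delta>"
  interpret prob_space ?P by (rule prob_space_noise_measure[OF assms(4)])
  define t where "t = M * sqrt (2 * \<delta>\<^sup>2 * L / n)"
  define t' where "t' = 20 * \<delta>\<^sup>2 * (sqrt (L / n) + L / n)"
  have "1 \<le> (real p)\<^sup>2"
    using assms(5) by simp
  then have "1 < 4 * (real p)\<^sup>2 / \<alpha>"
    using assms(6,7) by (simp add: field_simps)
  then have L: "L > 0" "exp (- L) = \<alpha> / (4 * (real p)\<^sup>2)"
    by (simp_all add: L_def ln_gt_zero exp_minus exp_ln[of "4 * (real p)\<^sup>2 / \<alpha>"])
  define bad where "bad j k = {W \<in> space ?P. t \<le> \<bar>\<Sum>i<n. X i j / n * W (i, k)\<bar>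
      \<or> real n * t' \<le> \<bar>centered_noise_gram n \<delta> W j k\<bar>}" for j k
  define U where "U = (\<Union>(j, k) \<in> {..<p} \<times> {..<p}. bad j k)"
  have bad: "bad j k \<in> sets ?P" "prob (bad j k) \<le> 4 * exp (- L)" if "j < p" "k < p" for j k
  proof -
    have [measurable]: "(\<lambda>W. \<Sum>i<n. X i j / n * W (i, k)) \<in> borel_measurable ?P"
      "(\<lambda>W. centered_noise_gram n \<delta> W j k) \<in> borel_measurable ?P"
      by (rule borel_measurable_noise_linear_form[OF that(2)], rule borel_measurable_centered_noise_gram[OF that])
    show "bad j k \<in> sets ?P" unfolding bad_def by measurable
    show "prob (bad j k) \<le> 4 * exp (- L)"
      unfolding bad_def t_def t'_def using assms X that L by (intro noisy_gram_entry_tail) auto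
  qed
  have "prob U \<le> (\<Sum>q \<in> {..<p} \<times> {..<p}. prob ((\<lambda>(j, k). bad j k) q))"
    unfolding U_def using bad(1) by (intro finite_measure_subadditive_finite) auto
  also have "\<dots> \<le> (\<Sum>q \<in> {..<p} \<times> {..<p}. 4 * exp (- L))"
    using bad(2) by (intro sum_mono) auto
  also have "\<dots> = \<alpha>"
    using assms(5) by (simp add: L(2) power2_eq_square)
  finally have U: "prob U \<le> \<alpha>" .
  have "space ?P - U \<subseteq> ?good"
  proof safe
    fix W assume W: "W \<in> space ?P" "W \<notin> U"
    then have not_bad: "W \<notin> bad j k" if "j < p" "k < p" for j k
      using that by (auto simp: U_def)
    have linear: "\<bar>\<Sum>i<n. X i j / n * W (i, k)\<bar> \<le> t"
      and quadratic: "\<bar>centered_noise_gram n \<delta> W j k\<bar> \<le> real n * t'" if "j < p" "k < p" for j k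
      using W(1) not_bad[OF that] by (auto simp: bad_def)
    have "inf_norm {..<p} {..<p} (\<lambda>j k. noisy_gram n \<delta> X W j k - gram n X j k) \<le> real p * (2 * t + t')"
      using assms(2,4) L(1) by (intro inf_norm_noisy_gram_minus_gram_le[OF assms(1) _ _ linear quadratic])
        (simp_all add: t_def t'_def)
    then show "inf_norm {..<p} {..<p} (\<lambda>j k. noisy_gram n \<delta> X W j k - gram n X j k) \<le> \<epsilon>"
      using \<epsilon> by (simp add: t_def t'_def mult.assoc)
  qed
  moreover have "(\<lambda>W. inf_norm {..<p} {..<p} (\<lambda>j k. noisy_gram n \<delta> X W j k - gram n X j k))
      \<in> borel_measurable ?P"
    by (intro borel_measurable_inf_norm borel_measurable_diff borel_measurable_noisy_gram
        borel_measurable_const) auto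
  then have "?good \<in> sets ?P"
    by measurable
  ultimately have "prob (space ?P - U) \<le> prob ?good"
    by (rule finite_measure_mono)
  moreover have "prob (space ?P - U) = 1 - prob U"
    unfolding U_def using bad(1) by (intro prob_compl) auto
  ultimately show ?thesis
    using U by linarith
qed

lemma noisy_gram_irrepresentable_prob:
  fixes n p :: nat
  assumes "n \<ge> 1" "M > 0" "\<forall>j<p. 1 / real n * (\<Sum>i<n. (X i j)\<^sup>2) \<le> M\<^sup>2" "\<delta> > 0"
    and "S \<noteq> {}" "S \<subset> {..<p}"
    and perturbation: "\<forall>\<Delta>. inf_norm {..<p} {..<p} \<Delta> \<le> \<epsilon>\<^sub>0 \<longrightarrow>
      sub_invertible S (\<lambda>j k. gram n X j k + \<Delta> j k) \<and> irrep p S (\<lambda>j k. gram n X j k + \<Delta> j k) \<le> 1 - \<eta> / 2"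
    and "0 < \<alpha>" "\<alpha> < 1"
    and "real p * (2 * M * sqrt (2 * \<delta>\<^sup>2 * ln (4 * (real p)\<^sup>2 / \<alpha>) / real n)
      + 20 * \<delta>\<^sup>2 * (sqrt (ln (4 * (real p)\<^sup>2 / \<alpha>) / real n) + ln (4 * (real p)\<^sup>2 / \<alpha>) / real n)) \<le> \<epsilon>\<^sub>0"
  shows "1 - \<alpha> \<le> measure (noise_measure n p \<delta>) {W \<in> space (noise_measure n p \<delta>).
    sub_invertible S (noisy_gram n \<delta> X W) \<and> irrep p S (noisy_gram n \<delta> X W) \<le> 1 - \<eta> / 2}"
proof -
  let ?P = "noise_measure n p \<delta>"
  interpret prob_space ?P by (rule prob_space_noise_measure[OF assms(4)])
  have "p \<ge> 1" using assms(5,6) by auto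
  then have "1 - \<alpha> \<le> prob {W \<in> space ?P.
      inf_norm {..<p} {..<p} (\<lambda>j k. noisy_gram n \<delta> X W j k - gram n X j k) \<le> \<epsilon>\<^sub>0}"
    using assms(1-4,8-10) by (intro noisy_gram_close_prob) auto
  also have "\<dots> \<le> prob {W \<in> space ?P.
      sub_invertible S (noisy_gram n \<delta> X W) \<and> irrep p S (noisy_gram n \<delta> X W) \<le> 1 - \<eta> / 2}"
  proof (rule finite_measure_mono)
    have "sub_invertible S (noisy_gram n \<delta> X W) \<and> irrep p S (noisy_gram n \<delta> X W) \<le> 1 - \<eta> / 2"
      if "inf_norm {..<p} {..<p} (\<lambda>j k. noisy_gram n \<delta> X W j k - gram n X j k) \<le> \<epsilon>\<^sub>0" for W
      using perturbation[rule_format, OF that] by simp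
    then show "{W \<in> space ?P. inf_norm {..<p} {..<p} (\<lambda>j k. noisy_gram n \<delta> X W j k - gram n X j k) \<le> \<epsilon>\<^sub>0}
      \<subseteq> {W \<in> space ?P. sub_invertible S (noisy_gram n \<delta> X W) \<and> irrep p S (noisy_gram n \<delta> X W) \<le> 1 - \<eta> / 2}"
      by auto
    show "{W \<in> space ?P. sub_invertible S (noisy_gram n \<delta> X W) \<and> irrep p S (noisy_gram n \<delta> X W) \<le> 1 - \<eta> / 2}
      \<in> sets ?P"
      using assms(6) by (intro sets_sub_invertible_irrep_le borel_measurable_noisy_gram) auto
  qed
  finally show ?thesis .
qed

theorem theorem1:
  shows "\<exists>C_t > 0. \<forall>(n::nat) (p::nat) (X :: nat \<Rightarrow> nat \<Rightarrow> real) (M::real) (\<delta>::real)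
            (S :: nat set) (\<eta>::real) (\<epsilon>\<^sub>0::real) (\<alpha>::real).
     n \<ge> 1 \<longrightarrow> M > 0 \<longrightarrow>
     (\<forall>j<p. (1 / real n) * (\<Sum>i<n. (X i j)\<^sup>2) \<le> M\<^sup>2) \<longrightarrow>
     \<delta> > 0 \<longrightarrow>
     S \<noteq> {} \<longrightarrow> S \<subset> {..<p} \<longrightarrow>
     sub_invertible S (gram n X) \<longrightarrow>
     0 < \<eta> \<longrightarrow> \<eta> < 1 \<longrightarrow>
     irrep p S (gram n X) \<le> 1 - \<eta> \<longrightarrow>
     \<epsilon>\<^sub>0 > 0 \<longrightarrow>
     (\<forall>\<Delta> :: nat \<Rightarrow> nat \<Rightarrow> real. inf_norm {..<p} {..<p} \<Delta> \<le> \<epsilon>\<^sub>0 \<longrightarrow>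
        (let A = (\<lambda>j k. gram n X j k + \<Delta> j k) in
           sub_invertible S A \<and> irrep p S A \<le> 1 - \<eta> / 2)) \<longrightarrow>
     0 < \<alpha> \<longrightarrow> \<alpha> < 1 \<longrightarrow>
     (let L = ln (4 * (real p)\<^sup>2 / \<alpha>);
          t\<^sub>1 = 2 * M * sqrt (2 * \<delta>\<^sup>2 * L / real n);
          t\<^sub>2 = C_t * \<delta>\<^sup>2 * (sqrt (L / real n) + L / real n);
          \<epsilon> = real p * (t\<^sub>1 + t\<^sub>2)
      in \<epsilon> \<le> \<epsilon>\<^sub>0 \<longrightarrow>
         measure (noise_measure n p \<delta>)
           {W \<in> space (noise_measure n p \<delta>).
              sub_invertible S (noisy_gram n \<delta> X W) \<and>
              irrep p S (noisy_gram n \<delta> X W) \<le> 1 - \<eta> / 2} \<ge> 1 - \<alpha>)"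
  \<comment> \<open>only the perturbation hypothesis is used\<close>
  unfolding Let_def
  by (intro exI[of _ "20 :: real"] conjI allI impI noisy_gram_irrepresentable_prob) simp_all

end
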